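(* Let $A\in\mathbb{R}^{n\times n}$ be Metzler and Hurwitz stable, $b_0\in\mathbb{R}^n_{\ge0}$, $g_0:=-e_n^TA^{-1}b_0$, $g_n:=-e_n^TA^{-1}e_n$, $\beta>0$, and $r\in\big(g_0/(1+\beta g_n),\,g_0\big)$. For $k>0$ consider $$\dot x=Ax-x_nze_n+b_0,\qquad \dot z=-\frac{k}{\beta}z(\beta-z)(r-e_n^Tx),$$ and its equilibrium with $z^*=\dfrac{g_0-r}{g_nr}$ and $x^*=-A^{-1}(b_0-rz^*e_n)$. Then $z^*\in(0,\beta)$ and this equilibrium is locally exponentially stable for all $k>0$.
   Context: $e_i$ standard basis vectors; $x_n=e_n^Tx$. Metzler: all off-diagonal entries nonnegative. Hurwitz stable: all eigenvalues have negative real part. An equilibrium is called locally exponentially stable here if the Jacobian matrix of the vector field at the equilibrium is Hurwitz stable. *)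

theory Defs
  imports Complex_Main "Jordan_Normal_Form.Matrix" "Jordan_Normal_Form.Char_Poly"
begin

definition metzler :: "nat \<Rightarrow> real mat \<Rightarrow> bool" where
  "metzler n A \<longleftrightarrow> A \<in> carrier_mat n n \<and>
     (\<forall>i<n. \<forall>j<n. i \<noteq> j \<longrightarrow> 0 \<le> A $$ (i, j))"

definition hurwitz :: "nat \<Rightarrow> real mat \<Rightarrow> bool" where
  "hurwitz n A \<longleftrightarrow> A \<in> carrier_mat n n \<and>
     (\<forall>c. eigenvalue (map_mat complex_of_real A) c \<longrightarrow> Re c < 0)"

definition minv :: "nat \<Rightarrow> real mat \<Rightarrow> real mat" where
  "minv n A = (SOME B. B \<in> carrier_mat n n \<and> A * B = 1\<^sub>m n \<and> B * A = 1\<^sub>m n)"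

definition jacobian :: "nat \<Rightarrow> (real vec \<Rightarrow> real vec) \<Rightarrow> real vec \<Rightarrow> real mat" where
  "jacobian N F w = mat N N (\<lambda>(i, j). THE D. ((\<lambda>t. F (w + t \<cdot>\<^sub>v unit_vec N j) $ i) has_real_derivative D) (at 0))"

definition loc_exp_stable :: "nat \<Rightarrow> (real vec \<Rightarrow> real vec) \<Rightarrow> real vec \<Rightarrow> bool" where
  "loc_exp_stable N F w \<longleftrightarrow> hurwitz N (jacobian N F w)"

text \<open>The closed-loop vector field on R^(n+1), state w = (x, z) with x = first n
  coordinates and z = coordinate n (0-based). e_n is unit_vec n (n-1), x_n = x $ (n-1).\<close>
definition field :: "nat \<Rightarrow> real mat \<Rightarrow> real vec \<Rightarrow> real \<Rightarrow> real \<Rightarrow> real \<Rightarrow> real vec \<Rightarrow> real vec" where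
  "field n A b0 k \<beta> r w =
    (let x = vec_first w n; z = w $ n in
     (A *\<^sub>v x - (x $ (n - 1) * z) \<cdot>\<^sub>v unit_vec n (n - 1) + b0)
       @\<^sub>v vec 1 (\<lambda>_. - (k / \<beta>) * z * (\<beta> - z) * (r - x $ (n - 1))))"

end

theory Submission
  imports Defs "Jordan_Normal_Form.Spectral_Radius"
begin

text \<open>A Metzler Hurwitz matrix \<open>A\<close> has positive vectors \<open>p\<close>, \<open>q\<close> with \<open>A p < 0\<close> and
  \<open>q\<^sup>T A < 0\<close>: the nonnegative matrix \<open>(A + s I) / (\<theta> s)\<close> has its spectrum in the unit disc, so
  a truncated Neumann series gives \<open>p\<close>. Then \<open>P = diag(q\<^sub>i / p\<^sub>i)\<close> is a diagonal Lyapunov weight,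
  \<open>Re (x\<^sup>* P A x) < 0\<close> for \<open>x \<noteq> 0\<close>, and stays one after subtracting a nonnegative diagonal
  matrix. It shows that \<open>A\<close> is invertible with \<open>(A\<^sup>-\<^sup>1)\<^sub>n\<^sub>n < 0\<close>, i.e. \<open>g\<^sub>n > 0\<close>, and
  \<open>0 < z\<^sup>* < \<beta>\<close> is then elementary. The Jacobian at the equilibrium is
  \<open>[[A - z\<^sup>* e\<^sub>n e\<^sub>n\<^sup>T, -r e\<^sub>n], [\<kappa> e\<^sub>n\<^sup>T, 0]]\<close> with \<open>\<kappa> = (k/\<beta>) z\<^sup>* (\<beta> - z\<^sup>*) > 0\<close>. For an
  eigenvector \<open>(v, v\<^sub>n\<^sub>+\<^sub>1)\<close>, extending \<open>P\<close> by the weight \<open>r P\<^sub>n / \<kappa>\<close> makes the coupling terms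
  cancel in real part, so \<open>Re \<mu>\<close> times a positive energy equals \<open>Re (v\<^sup>* P (A - z\<^sup>* e\<^sub>n e\<^sub>n\<^sup>T) v) < 0\<close>.\<close>

section \<open>Positive vectors of Metzler Hurwitz matrices\<close>

lemma shift_into_disc:
  fixes L :: "complex set" and b :: real
  assumes fin: "finite L" and neg: "\<forall>l\<in>L. Re l < 0"
  shows "\<exists>s>(0::real). s \<ge> b \<and> (\<forall>l\<in>L. cmod (l + of_real s) < s)"
proof -
  \<comment> \<open>\<open>|l + s|\<^sup>2 = |l|\<^sup>2 + 2 s Re l + s\<^sup>2 < s\<^sup>2\<close> as soon as \<open>s > |l|\<^sup>2 / (- Re l)\<close>.\<close>
  define s where "s = 1 + \<bar>b\<bar> + (\<Sum>l\<in>L. (cmod l)^2 / (- Re l))"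
  have nn: "\<And>l. l \<in> L \<Longrightarrow> 0 \<le> (cmod l)^2 / (- Re l)"
    using neg by (metis divide_nonneg_pos neg_0_less_iff_less zero_le_power2)
  have ge: "\<And>l. l \<in> L \<Longrightarrow> (cmod l)^2 / (- Re l) \<le> (\<Sum>l\<in>L. (cmod l)^2 / (- Re l))"
    by (rule member_le_sum) (use nn fin in auto)
  have sn: "(\<Sum>l\<in>L. (cmod l)^2 / (- Re l)) \<ge> 0" by (rule sum_nonneg) (rule nn)
  have s0: "s > 0" and sb: "s \<ge> b" unfolding s_def using sn by linarith+
  have "cmod (l + of_real s) < s" if l: "l \<in> L" for l
  proof -
    have rl: "Re l < 0" using neg l by auto
    have "(cmod l)^2 / (- Re l) < s" using ge[OF l] unfolding s_def by auto
    hence "(cmod l)^2 < s * (- Re l)" using rl by (metis neg_0_less_iff_less pos_divide_less_eq)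
    moreover have "s * Re l < 0" using s0 rl by (simp add: mult_pos_neg)
    ultimately have lt: "(cmod l)^2 + 2 * s * Re l < 0" by linarith
    have "(cmod (l + of_real s))^2 = (Re l + s)^2 + (Im l)^2"
      by (simp add: cmod_power2)
    also have "\<dots> = (cmod l)^2 + 2 * s * Re l + s^2"
      by (simp add: cmod_power2 power2_eq_square algebra_simps)
        (metis cmod_power2 power2_eq_square add.commute)
    also have "\<dots> < s^2" using lt by simp
    finally show ?thesis using s0 power2_less_imp_less less_imp_le by blast
  qed
  thus ?thesis using s0 sb by blast
qed

lemma shift_into_smaller_disc:
  fixes L :: "complex set" and s :: real
  assumes fin: "finite L" and lt: "\<forall>l\<in>L. cmod (l + of_real s) < s" and s0: "s > 0"
  shows "\<exists>\<theta>>0. \<theta> < 1 \<and> (\<forall>l\<in>L. cmod (l + of_real s) < \<theta> * s)"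
proof -
  define m where "m = Max (insert 0 ((\<lambda>l. cmod (l + of_real s) / s) ` L))"
  have fm: "finite (insert 0 ((\<lambda>l. cmod (l + of_real s) / s) ` L))" using fin by auto
  have m0: "m \<ge> 0" unfolding m_def using fm by (simp add: Max_ge_iff)
  have m1: "m < 1" unfolding m_def using fm lt s0 by (auto simp: divide_less_eq)
  have ml: "cmod (l + of_real s) / s \<le> m" if "l \<in> L" for l
    unfolding m_def using fm that by (intro Max_ge) auto
  show ?thesis
  proof (intro exI[of _ "(1 + m) / 2"] conjI ballI)
    show "(1 + m) / 2 > 0" "(1 + m) / 2 < 1" using m0 m1 by auto
    fix l assume l: "l \<in> L"
    have "cmod (l + of_real s) \<le> m * s" using ml[OF l] s0 by (simp add: divide_le_eq)
    also have "\<dots> < (1 + m) / 2 * s" using m1 s0 by (simp add: field_simps)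
    finally show "cmod (l + of_real s) < (1 + m) / 2 * s" .
  qed
qed

lemma pow_mat_Suc_left:
  assumes A: "(A :: 'a :: semiring_1 mat) \<in> carrier_mat n n"
  shows "A ^\<^sub>m Suc k = A * A ^\<^sub>m k"
proof (induct k)
  case 0 then show ?case using A by simp
next
  case (Suc k)
  have "A ^\<^sub>m Suc (Suc k) = (A * A ^\<^sub>m k) * A" using Suc by simp
  also have "\<dots> = A * A ^\<^sub>m Suc k" using A by (simp add: assoc_mult_mat[of _ n n _ n _ n])
  finally show ?case .
qed

lemma pow_mat_Suc_index:
  assumes A: "(A :: 'a :: semiring_1 mat) \<in> carrier_mat n n" and "i < n" "j < n"
  shows "(A ^\<^sub>m Suc k) $$ (i, j) = (\<Sum>l<n. A $$ (i, l) * (A ^\<^sub>m k) $$ (l, j))"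
  unfolding pow_mat_Suc_left[OF A] using assms by (simp add: scalar_prod_def lessThan_atLeast0)

text \<open>The partial sums \<open>\<Sum>k<K. \<theta>^k T^k \<one>\<close> of the Neumann series, computed entrywise.\<close>
fun neumann_sum :: "nat \<Rightarrow> real mat \<Rightarrow> real \<Rightarrow> nat \<Rightarrow> nat \<Rightarrow> real" where
  "neumann_sum n T \<theta> 0 i = 0"
| "neumann_sum n T \<theta> (Suc K) i = 1 + \<theta> * (\<Sum>l<n. T $$ (i, l) * neumann_sum n T \<theta> K l)"

lemma neumann_sum_nonneg:
  assumes "\<forall>i<n. \<forall>j<n. T $$ (i, j) \<ge> 0" "\<theta> \<ge> 0" "i < n"
  shows "neumann_sum n T \<theta> K i \<ge> 0"
  using assms
  by (induct K arbitrary: i) (auto intro!: sum_nonneg add_nonneg_nonneg mult_nonneg_nonneg)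

lemma neumann_sum_defect:
  assumes T: "T \<in> carrier_mat n n" and i: "i < n"
  shows "neumann_sum n T \<theta> K i - \<theta> * (\<Sum>l<n. T $$ (i, l) * neumann_sum n T \<theta> K l)
     = 1 - \<theta>^K * (\<Sum>j<n. (T ^\<^sub>m K) $$ (i, j))"
  using i
proof (induct K arbitrary: i)
  case 0
  have "(\<Sum>j<n. (1\<^sub>m n :: real mat) $$ (i, j)) = (\<Sum>j<n. if j = i then 1 else 0)"
    using 0 by (intro sum.cong) auto
  then show ?case using T 0 by simp
next
  case (Suc K)
  let ?p = "neumann_sum n T \<theta> K"
  have IH: "\<And>l. l < n \<Longrightarrow> ?p l - 1 - \<theta> * (\<Sum>m<n. T $$ (l, m) * ?p m)
       = - (\<theta>^K * (\<Sum>j<n. (T ^\<^sub>m K) $$ (l, j)))" using Suc by force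
  have "neumann_sum n T \<theta> (Suc K) i - \<theta> * (\<Sum>l<n. T $$ (i, l) * neumann_sum n T \<theta> (Suc K) l)
      = 1 + \<theta> * (\<Sum>l<n. T $$ (i, l) * (?p l - 1 - \<theta> * (\<Sum>m<n. T $$ (l, m) * ?p m)))"
    by (simp add: algebra_simps sum_subtractf sum_distrib_left)
  also have "\<dots> = 1 + \<theta> * (\<Sum>l<n. T $$ (i, l) * (- (\<theta>^K * (\<Sum>j<n. (T ^\<^sub>m K) $$ (l, j)))))"
    using IH by (intro arg_cong[where f="\<lambda>x. 1 + \<theta> * x"] sum.cong) auto
  also have "\<dots> = 1 - \<theta>^(Suc K) * (\<Sum>j<n. \<Sum>l<n. T $$ (i, l) * (T ^\<^sub>m K) $$ (l, j))"
  proof -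
    have "(\<Sum>l<n. T $$ (i, l) * (- (\<theta>^K * (\<Sum>j<n. (T ^\<^sub>m K) $$ (l, j)))))
        = - (\<theta>^K * (\<Sum>l<n. \<Sum>j<n. T $$ (i, l) * (T ^\<^sub>m K) $$ (l, j)))"
      by (simp add: sum_distrib_left sum_negf mult.left_commute)
    also have "(\<Sum>l<n. \<Sum>j<n. T $$ (i, l) * (T ^\<^sub>m K) $$ (l, j))
        = (\<Sum>j<n. \<Sum>l<n. T $$ (i, l) * (T ^\<^sub>m K) $$ (l, j))"
      by (rule sum.swap)
    finally show ?thesis by simp
  qed
  also have "\<dots> = 1 - \<theta>^(Suc K) * (\<Sum>j<n. (T ^\<^sub>m Suc K) $$ (i, j))"
    using pow_mat_Suc_index[OF T Suc.prems] by simp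
  finally show ?case .
qed

text \<open>Truncate the Neumann series of \<open>\<theta> T\<close> late enough; only boundedness of the powers of
  \<open>T\<close> is used.\<close>
lemma nonneg_mat_subinvariant_vector:
  fixes c :: real
  assumes T: "T \<in> carrier_mat n n" and nn: "\<forall>i<n. \<forall>j<n. T $$ (i, j) \<ge> 0"
    and th: "0 < \<theta>" "\<theta> < 1"
    and bd: "\<And>k i j. i < n \<Longrightarrow> j < n \<Longrightarrow> \<bar>(T ^\<^sub>m k) $$ (i, j)\<bar> \<le> c"
  shows "\<exists>p. (\<forall>i<n. p i \<ge> 1) \<and> (\<forall>i<n. \<theta> * (\<Sum>l<n. T $$ (i, l) * p l) < p i)"
proof -
  define C where "C = real n * \<bar>c\<bar> + 1"
  have C: "C > 0" unfolding C_def by (simp add: add_nonneg_pos)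
  obtain K where K: "\<theta>^K < 1 / C"
    using real_arch_pow_inv[of "1 / C" \<theta>] C th by auto
  define p where "p = neumann_sum n T \<theta> (Suc K)"
  show ?thesis
  proof (intro exI[of _ p] conjI allI impI)
    fix i assume i: "i < n"
    have "\<theta> * (\<Sum>l<n. T $$ (i, l) * neumann_sum n T \<theta> K l) \<ge> 0"
      using neumann_sum_nonneg[OF nn] th nn i by (auto intro!: sum_nonneg mult_nonneg_nonneg)
    then show "p i \<ge> 1" unfolding p_def by simp
    have "\<bar>\<Sum>j<n. (T ^\<^sub>m Suc K) $$ (i, j)\<bar> \<le> (\<Sum>j<n. \<bar>c\<bar>)"
    proof (intro order.trans[OF sum_abs] sum_mono)
      fix j assume "j \<in> {..<n}"
      then show "\<bar>(T ^\<^sub>m Suc K) $$ (i, j)\<bar> \<le> \<bar>c\<bar>" using bd[OF i, of j "Suc K"] by simp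
    qed
    hence "\<bar>\<Sum>j<n. (T ^\<^sub>m Suc K) $$ (i, j)\<bar> < C" unfolding C_def by simp
    moreover have "\<theta>^(Suc K) \<le> \<theta>^K" using th by (simp add: mult_le_one)
    ultimately have "\<theta>^(Suc K) * \<bar>\<Sum>j<n. (T ^\<^sub>m Suc K) $$ (i, j)\<bar> \<le> \<theta>^K * C"
      using th by (intro mult_mono) auto
    hence "\<theta>^(Suc K) * (\<Sum>j<n. (T ^\<^sub>m Suc K) $$ (i, j)) \<le> \<theta>^K * C"
      using th by (smt (verit) abs_ge_self mult_left_mono zero_le_power)
    also have "\<dots> < 1" using K C by (simp add: pos_less_divide_eq mult.commute)
    finally show "\<theta> * (\<Sum>l<n. T $$ (i, l) * p l) < p i"
      unfolding p_def using neumann_sum_defect[OF T i, of \<theta> "Suc K"] by linarith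
  qed
qed

definition shift_scale_mat :: "nat \<Rightarrow> real mat \<Rightarrow> real \<Rightarrow> real \<Rightarrow> real mat" where
  "shift_scale_mat n A s c = mat n n (\<lambda>(i, j). (A $$ (i, j) + (if i = j then s else 0)) / c)"

lemma eigenvalue_shift_scale_mat:
  assumes A: "A \<in> carrier_mat n n" and c: "c \<noteq> 0"
    and ev: "eigenvalue (map_mat complex_of_real (shift_scale_mat n A s c)) \<mu>"
  shows "eigenvalue (map_mat complex_of_real A) (of_real c * \<mu> - of_real s)"
proof -
  let ?U = "map_mat complex_of_real (shift_scale_mat n A s c)"
  let ?CA = "map_mat complex_of_real A"
  have CA: "?CA \<in> carrier_mat n n" using A by auto
  obtain v where v: "v \<in> carrier_vec n" "v \<noteq> 0\<^sub>v n" "?U *\<^sub>v v = \<mu> \<cdot>\<^sub>v v"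
    using ev unfolding eigenvalue_def eigenvector_def shift_scale_mat_def by auto
  have "?CA *\<^sub>v v = (of_real c * \<mu> - of_real s) \<cdot>\<^sub>v v"
  proof (rule eq_vecI)
    fix i assume "i < dim_vec ((of_real c * \<mu> - of_real s) \<cdot>\<^sub>v v)"
    hence i: "i < n" using v by auto
    have CAv: "(?CA *\<^sub>v v) $ i = (\<Sum>j<n. of_real (A $$ (i, j)) * v $ j)"
      using i v(1) A by (auto simp: scalar_prod_def lessThan_atLeast0 intro!: sum.cong)
    have "\<mu> * v $ i = (?U *\<^sub>v v) $ i" by (subst v(3)) (use i v(1) in auto)
    also have "\<dots> = (\<Sum>j<n. of_real ((A $$ (i, j) + (if i = j then s else 0)) / c) * v $ j)"
      using i v(1) unfolding shift_scale_mat_def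
      by (auto simp: scalar_prod_def lessThan_atLeast0 intro!: sum.cong)
    also have "\<dots> = (\<Sum>j<n. of_real (A $$ (i, j)) * v $ j + (if j = i then of_real s * v $ j else 0))
                       / of_real c"
      unfolding sum_divide_distrib by (intro sum.cong) (auto simp: field_simps)
    also have "\<dots> = ((?CA *\<^sub>v v) $ i + of_real s * v $ i) / of_real c"
      using i unfolding CAv by (simp add: sum.distrib)
    finally have "(?CA *\<^sub>v v) $ i = of_real c * \<mu> * v $ i - of_real s * v $ i"
      using c by (simp add: field_simps)
    thus "(?CA *\<^sub>v v) $ i = ((of_real c * \<mu> - of_real s) \<cdot>\<^sub>v v) $ i"
      using i v by (simp add: algebra_simps)
  qed (use v CA in auto)
  thus ?thesis unfolding eigenvalue_def eigenvector_def using v CA by auto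
qed

lemma spectrum_in_unit_disc_pow_bounded:
  assumes T: "T \<in> carrier_mat n n" and n0: "n > 0"
    and ev: "\<And>\<mu>. eigenvalue (map_mat complex_of_real T) \<mu> \<Longrightarrow> cmod \<mu> < 1"
  obtains c where "\<And>k i j. i < n \<Longrightarrow> j < n \<Longrightarrow> \<bar>(T ^\<^sub>m k) $$ (i, j)\<bar> \<le> c"
proof -
  let ?U = "map_mat complex_of_real T"
  have U: "?U \<in> carrier_mat n n" using T by auto
  have "spectral_radius ?U < 1"
    using spectral_radius_mem_max(1)[OF U n0] ev unfolding spectrum_def by auto
  then obtain c where c: "\<And>k. norm_bound (?U ^\<^sub>m k) c"
    using spectral_radius_jnf_norm_bound_less_1_upper_triangular[OF U] by blast
  have "\<bar>(T ^\<^sub>m k) $$ (i, j)\<bar> \<le> c" if "i < n" "j < n" for k i j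
  proof -
    have "?U ^\<^sub>m k = map_mat complex_of_real (T ^\<^sub>m k)"
      using of_real_hom.mat_hom_pow[OF T] by metis
    hence "norm ((map_mat complex_of_real (T ^\<^sub>m k)) $$ (i, j)) \<le> c"
      using c[of k] that U unfolding norm_bound_def by (metis pow_carrier_mat carrier_matD)
    thus ?thesis using that T by simp
  qed
  with that show ?thesis .
qed

lemma metzler_hurwitz_shift_scale:
  assumes met: "metzler n A" and hur: "hurwitz n A"
  obtains s \<theta> where "0 < s" "0 < \<theta>" "\<theta> < 1"
    and "\<forall>i<n. \<forall>j<n. 0 \<le> shift_scale_mat n A s (\<theta> * s) $$ (i, j)"
    and "\<And>\<mu>. eigenvalue (map_mat complex_of_real (shift_scale_mat n A s (\<theta> * s))) \<mu> \<Longrightarrow> cmod \<mu> < 1"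
proof -
  have A: "A \<in> carrier_mat n n" using met unfolding metzler_def by auto
  let ?CA = "map_mat complex_of_real A"
  have finL: "finite (spectrum ?CA)" using card_finite_spectrum[of ?CA n] A by auto
  have negL: "\<forall>l\<in>spectrum ?CA. Re l < 0" using hur unfolding spectrum_def hurwitz_def by auto
  obtain s where s0: "s > 0" and sb: "s \<ge> (\<Sum>i<n. \<bar>A $$ (i, i)\<bar>)"
    and sL: "\<forall>l\<in>spectrum ?CA. cmod (l + of_real s) < s"
    using shift_into_disc[OF finL negL] by blast
  obtain \<theta> where th0: "\<theta> > 0" and th1: "\<theta> < 1"
    and thL: "\<forall>l\<in>spectrum ?CA. cmod (l + of_real s) < \<theta> * s"
    using shift_into_smaller_disc[OF finL sL s0] by blast
  have "A $$ (i, i) + s \<ge> 0" if "i < n" for i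
    using member_le_sum[of i "{..<n}" "\<lambda>i. \<bar>A $$ (i, i)\<bar>"] that sb by auto
  hence "\<forall>i<n. \<forall>j<n. 0 \<le> shift_scale_mat n A s (\<theta> * s) $$ (i, j)"
    using met s0 th0 unfolding shift_scale_mat_def metzler_def by auto
  moreover have "cmod \<mu> < 1" if "eigenvalue (map_mat complex_of_real (shift_scale_mat n A s (\<theta> * s))) \<mu>" for \<mu>
  proof -
    have "of_real (\<theta> * s) * \<mu> - of_real s \<in> spectrum ?CA"
      using eigenvalue_shift_scale_mat[OF A _ that] s0 th0 unfolding spectrum_def by auto
    hence "\<theta> * s * cmod \<mu> < \<theta> * s * 1" using thL s0 th0 by (force simp: norm_mult)
    thus ?thesis using s0 th0 by (simp add: mult_less_cancel_left_pos)
  qed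
  ultimately show ?thesis using that s0 th0 th1 by blast
qed

text \<open>A subinvariant vector of \<open>(A + s I) / (\<theta> s)\<close> is a positive \<open>p\<close> with \<open>A p < 0\<close>.\<close>
lemma metzler_hurwitz_pos_vector:
  assumes met: "metzler n A" and hur: "hurwitz n A" and n0: "n > 0"
  shows "\<exists>p. (\<forall>i<n. p i > 0) \<and> (\<forall>i<n. (\<Sum>l<n. A $$ (i, l) * p l) < 0)"
proof -
  obtain s \<theta> where s0: "0 < s" and th0: "0 < \<theta>" and th1: "\<theta> < 1"
    and Tnn: "\<forall>i<n. \<forall>j<n. 0 \<le> shift_scale_mat n A s (\<theta> * s) $$ (i, j)"
    and ev: "\<And>\<mu>. eigenvalue (map_mat complex_of_real (shift_scale_mat n A s (\<theta> * s))) \<mu> \<Longrightarrow> cmod \<mu> < 1"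
    using metzler_hurwitz_shift_scale[OF met hur] by blast
  let ?T = "shift_scale_mat n A s (\<theta> * s)"
  have T: "?T \<in> carrier_mat n n" unfolding shift_scale_mat_def by auto
  obtain c where "\<And>k i j. i < n \<Longrightarrow> j < n \<Longrightarrow> \<bar>(?T ^\<^sub>m k) $$ (i, j)\<bar> \<le> c"
    using spectrum_in_unit_disc_pow_bounded[OF T n0 ev] by blast
  then obtain p where p1: "\<forall>i<n. p i \<ge> 1" and p2: "\<forall>i<n. \<theta> * (\<Sum>l<n. ?T $$ (i, l) * p l) < p i"
    using nonneg_mat_subinvariant_vector[OF T Tnn th0 th1] by blast
  have "(\<Sum>l<n. A $$ (i, l) * p l) < 0" if i: "i < n" for i
  proof -
    have "\<theta> * (\<Sum>l<n. ?T $$ (i, l) * p l) = (\<Sum>l<n. A $$ (i, l) * p l + (if l = i then s * p l else 0)) / s"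
      using i s0 th0 unfolding shift_scale_mat_def sum_distrib_left sum_divide_distrib
      by (intro sum.cong) (auto simp: field_simps)
    also have "\<dots> = (\<Sum>l<n. A $$ (i, l) * p l) / s + p i"
      using i s0 by (simp add: sum.distrib add_divide_distrib)
    finally have "(\<Sum>l<n. A $$ (i, l) * p l) / s < 0" using p2 i by force
    thus ?thesis using s0 by (simp add: divide_less_0_iff)
  qed
  moreover have "\<forall>i<n. p i > 0" using p1 by force
  ultimately show ?thesis by blast
qed

section \<open>Diagonal Lyapunov weights\<close>

definition diag_lyapunov :: "nat \<Rightarrow> (nat \<Rightarrow> nat \<Rightarrow> real) \<Rightarrow> (nat \<Rightarrow> real) \<Rightarrow> bool" where
  "diag_lyapunov n B P \<longleftrightarrow> (\<forall>i<n. 0 < P i) \<and>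
     (\<forall>x. (\<exists>i<n. x i \<noteq> 0) \<longrightarrow>
        Re (\<Sum>i<n. \<Sum>j<n. cnj (x i) * of_real (P i * B i j) * x j) < 0)"

lemma Re_cnj_scaled_le:
  fixes a b :: complex and c :: real
  assumes "0 \<le> c \<or> a = b"
  shows "Re (cnj a * of_real c * b) \<le> c * (((cmod a)^2 + (cmod b)^2) / 2)"
proof (cases "a = b")
  case True
  have "cnj a * a = of_real ((cmod a)^2)" by (metis complex_norm_square mult.commute)
  hence "cnj a * of_real c * a = of_real (c * (cmod a)^2)"
    by (metis mult.commute mult.left_commute of_real_mult)
  then have "Re (cnj a * of_real c * a) = c * (cmod a)^2" by (simp only: Re_complex_of_real)
  then show ?thesis using True by simp
next
  case False
  have "(cmod a)^2 = (Re a)^2 + (Im a)^2" "(cmod b)^2 = (Re b)^2 + (Im b)^2"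
    by (simp_all add: cmod_power2)
  moreover have "0 \<le> (Re a - Re b)^2 + (Im a - Im b)^2" by simp
  ultimately have "Re (cnj a * b) \<le> ((cmod a)^2 + (cmod b)^2) / 2"
    by (simp add: power2_eq_square algebra_simps)
  then have "c * Re (cnj a * b) \<le> c * (((cmod a)^2 + (cmod b)^2) / 2)"
    using False assms by (intro mult_left_mono) auto
  moreover have "Re (cnj a * of_real c * b) = c * Re (cnj a * b)" by (simp add: algebra_simps)
  ultimately show ?thesis by simp
qed

text \<open>With \<open>x = diag(p) y\<close>, the bound \<open>Re (cnj y\<^sub>i y\<^sub>j) \<le> (|y\<^sub>i|\<^sup>2 + |y\<^sub>j|\<^sup>2) / 2\<close> on the
  nonnegative off-diagonal terms splits the form into a row part and a column part.\<close>
lemma metzler_form_le: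
  fixes B :: "nat \<Rightarrow> nat \<Rightarrow> real" and p q :: "nat \<Rightarrow> real" and x :: "nat \<Rightarrow> complex"
  assumes off: "\<forall>i<n. \<forall>j<n. i \<noteq> j \<longrightarrow> B i j \<ge> 0"
    and pp: "\<forall>i<n. p i > 0" and qp: "\<forall>i<n. q i > 0"
  defines "y \<equiv> \<lambda>i. x i / of_real (p i)"
  shows "Re (\<Sum>i<n. \<Sum>j<n. cnj (x i) * of_real (q i / p i * B i j) * x j)
    \<le> (\<Sum>i<n. (cmod (y i))^2 * q i * (\<Sum>j<n. B i j * p j)) / 2
     + (\<Sum>j<n. (cmod (y j))^2 * p j * (\<Sum>i<n. q i * B i j)) / 2"
proof -
  define h where "h i j = q i * B i j * p j * (((cmod (y i))^2 + (cmod (y j))^2) / 2)" for i j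
  have le: "Re (cnj (x i) * of_real (q i / p i * B i j) * x j) \<le> h i j" if "i < n" "j < n" for i j
  proof -
    have "p i \<noteq> 0" "p j \<noteq> 0" using pp that by auto
    hence eq: "cnj (x i) * of_real (q i / p i * B i j) * x j = cnj (y i) * of_real (q i * B i j * p j) * y j"
      unfolding y_def by (simp add: field_simps)
    have "0 \<le> q i * B i j * p j \<or> y i = y j"
      using off pp qp that by (cases "i = j") (simp_all add: less_imp_le)
    from Re_cnj_scaled_le[OF this] show ?thesis unfolding h_def eq .
  qed
  have hs: "h i j = (cmod (y i))^2 * q i * (B i j * p j) / 2 + (cmod (y j))^2 * p j * (q i * B i j) / 2"
    for i j unfolding h_def by (simp add: algebra_simps add_divide_distrib)
  have "Re (\<Sum>i<n. \<Sum>j<n. cnj (x i) * of_real (q i / p i * B i j) * x j)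
     = (\<Sum>i<n. \<Sum>j<n. Re (cnj (x i) * of_real (q i / p i * B i j) * x j))" by simp
  also have "\<dots> \<le> (\<Sum>i<n. \<Sum>j<n. h i j)" using le by (intro sum_mono) auto
  also have "\<dots> = (\<Sum>i<n. \<Sum>j<n. (cmod (y i))^2 * q i * (B i j * p j)) / 2
       + (\<Sum>i<n. \<Sum>j<n. (cmod (y j))^2 * p j * (q i * B i j)) / 2"
    unfolding hs sum.distrib by (simp only: sum_divide_distrib)
  also have "(\<Sum>i<n. \<Sum>j<n. (cmod (y j))^2 * p j * (q i * B i j))
           = (\<Sum>j<n. \<Sum>i<n. (cmod (y j))^2 * p j * (q i * B i j))"
    by (rule sum.swap)
  finally show ?thesis by (simp add: sum_distrib_left)
qed

lemma metzler_diag_lyapunov: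
  fixes B :: "nat \<Rightarrow> nat \<Rightarrow> real" and p q :: "nat \<Rightarrow> real"
  assumes off: "\<forall>i<n. \<forall>j<n. i \<noteq> j \<longrightarrow> B i j \<ge> 0"
    and pp: "\<forall>i<n. p i > 0" and qp: "\<forall>i<n. q i > 0"
    and rn: "\<forall>i<n. (\<Sum>j<n. B i j * p j) < 0"
    and cn: "\<forall>j<n. (\<Sum>i<n. q i * B i j) < 0"
  shows "diag_lyapunov n B (\<lambda>i. q i / p i)"
  unfolding diag_lyapunov_def
proof (intro conjI allI impI)
  show "0 < q i / p i" if "i < n" for i using pp qp that by simp
next
  fix x :: "nat \<Rightarrow> complex" assume "\<exists>i<n. x i \<noteq> 0"
  then obtain k where k: "k < n" "x k \<noteq> 0" by blast
  define y where "y = (\<lambda>i. x i / of_real (p i))"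
  have yk: "y k \<noteq> 0" using pp k unfolding y_def by auto
  have rows: "(\<Sum>i<n. (cmod (y i))^2 * q i * (\<Sum>j<n. B i j * p j)) < (\<Sum>i<n. 0)"
  proof (rule sum_strict_mono_ex1)
    show "\<forall>i\<in>{..<n}. (cmod (y i))^2 * q i * (\<Sum>j<n. B i j * p j) \<le> 0"
      using qp rn by (simp add: mult_nonneg_nonpos less_imp_le)
    show "\<exists>i\<in>{..<n}. (cmod (y i))^2 * q i * (\<Sum>j<n. B i j * p j) < 0"
      using qp rn k yk by (intro bexI[of _ k]) (auto intro!: mult_pos_neg)
  qed simp
  have cols: "(\<Sum>j<n. (cmod (y j))^2 * p j * (\<Sum>i<n. q i * B i j)) \<le> 0"
  proof (rule sum_nonpos)
    fix j assume "j \<in> {..<n}"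
    then have "(cmod (y j))^2 * p j \<ge> 0" "(\<Sum>i<n. q i * B i j) \<le> 0" using pp cn by (auto intro: less_imp_le)
    thus "(cmod (y j))^2 * p j * (\<Sum>i<n. q i * B i j) \<le> 0" by (rule mult_nonneg_nonpos)
  qed
  show "Re (\<Sum>i<n. \<Sum>j<n. cnj (x i) * of_real (q i / p i * B i j) * x j) < 0"
    using metzler_form_le[OF off pp qp, of x] rows[unfolded sum.neutral_const] cols
    unfolding y_def by linarith
qed

lemma diag_lyapunov_diff_diag:
  assumes L: "diag_lyapunov n B P" and d: "\<forall>i<n. 0 \<le> d i"
  shows "diag_lyapunov n (\<lambda>i j. B i j - (if i = j then d i else 0)) P"
  unfolding diag_lyapunov_def
proof (intro conjI allI impI)
  show "0 < P i" if "i < n" for i using L that unfolding diag_lyapunov_def by blast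
next
  fix x :: "nat \<Rightarrow> complex" assume x: "\<exists>i<n. x i \<noteq> 0"
  have row: "(\<Sum>j<n. cnj (x i) * of_real (P i * (B i j - (if i = j then d i else 0))) * x j)
      = (\<Sum>j<n. cnj (x i) * of_real (P i * B i j) * x j) - of_real (P i * d i * (cmod (x i))^2)"
    if i: "i < n" for i
  proof -
    have "(\<Sum>j<n. cnj (x i) * of_real (P i * (B i j - (if i = j then d i else 0))) * x j)
      = (\<Sum>j<n. cnj (x i) * of_real (P i * B i j) * x j
               - (if i = j then cnj (x i) * of_real (P i * d i) * x i else 0))"
      by (intro sum.cong) (auto simp: algebra_simps)
    also have "\<dots> = (\<Sum>j<n. cnj (x i) * of_real (P i * B i j) * x j) - cnj (x i) * of_real (P i * d i) * x i"
      using i by (simp add: sum_subtractf)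
    also have "cnj (x i) * of_real (P i * d i) * x i = of_real (P i * d i) * (cnj (x i) * x i)"
      by (simp add: ac_simps)
    also have "\<dots> = of_real (P i * d i * (cmod (x i))^2)"
      unfolding of_real_mult by (metis complex_norm_square mult.commute)
    finally show ?thesis .
  qed
  have "(\<Sum>i<n. \<Sum>j<n. cnj (x i) * of_real (P i * (B i j - (if i = j then d i else 0))) * x j)
      = (\<Sum>i<n. \<Sum>j<n. cnj (x i) * of_real (P i * B i j) * x j)
        - of_real (\<Sum>i<n. P i * d i * (cmod (x i))^2)"
    using row by (simp add: sum_subtractf del: of_real_power)
  moreover have "(\<Sum>i<n. P i * d i * (cmod (x i))^2) \<ge> 0"
    using L d unfolding diag_lyapunov_def by (intro sum_nonneg) (simp add: less_imp_le)
  moreover have "Re (\<Sum>i<n. \<Sum>j<n. cnj (x i) * of_real (P i * B i j) * x j) < 0"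
    using L x unfolding diag_lyapunov_def by blast
  ultimately show "Re (\<Sum>i<n. \<Sum>j<n. cnj (x i) * of_real (P i * (B i j - (if i = j then d i else 0))) * x j) < 0"
    by simp
qed

lemma diag_lyapunov_real_form:
  assumes L: "diag_lyapunov n (\<lambda>i j. A $$ (i, j)) P" and A: "A \<in> carrier_mat n n"
    and u: "u \<in> carrier_vec n" "u \<noteq> 0\<^sub>v n"
  shows "(\<Sum>i<n. P i * u $ i * (A *\<^sub>v u) $ i) < 0"
proof -
  have "\<exists>i<n. complex_of_real (u $ i) \<noteq> 0"
  proof (rule ccontr)
    assume "\<not> ?thesis"
    hence "u = 0\<^sub>v n" using u(1) by (intro eq_vecI) auto
    thus False using u(2) by simp
  qed
  hence "Re (\<Sum>i<n. \<Sum>j<n. cnj (of_real (u $ i)) * of_real (P i * A $$ (i, j)) * of_real (u $ j)) < 0"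
    using L unfolding diag_lyapunov_def by (elim conjE allE[of _ "\<lambda>i. of_real (u $ i)"]) simp
  moreover have "(\<Sum>i<n. P i * u $ i * (A *\<^sub>v u) $ i)
      = (\<Sum>i<n. \<Sum>j<n. u $ i * (P i * A $$ (i, j)) * u $ j)"
    using A u by (auto simp: scalar_prod_def lessThan_atLeast0 sum_distrib_left ac_simps intro!: sum.cong)
  ultimately show ?thesis by simp
qed

lemma hurwitz_transpose:
  assumes hur: "hurwitz n A"
  shows "hurwitz n (transpose_mat A)"
proof -
  have A: "A \<in> carrier_mat n n" using hur unfolding hurwitz_def by auto
  let ?CA = "map_mat complex_of_real A"
  have CA: "?CA \<in> carrier_mat n n" "transpose_mat ?CA \<in> carrier_mat n n" using A by auto
  have "map_mat complex_of_real (transpose_mat A) = transpose_mat ?CA"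
    by (simp add: map_mat_transpose)
  thus ?thesis using hur A unfolding hurwitz_def
    by (simp add: eigenvalue_root_char_poly[OF CA(1)] eigenvalue_root_char_poly[OF CA(2)]
        char_poly_transpose_mat[OF CA(1)])
qed

lemma metzler_hurwitz_diag_lyapunov:
  assumes met: "metzler n A" and hur: "hurwitz n A" and n0: "n > 0"
  obtains P where "diag_lyapunov n (\<lambda>i j. A $$ (i, j)) P"
proof -
  have A: "A \<in> carrier_mat n n" using met unfolding metzler_def by auto
  have "metzler n (transpose_mat A)" using met unfolding metzler_def by auto
  with hurwitz_transpose[OF hur] obtain q where q: "\<forall>i<n. q i > 0"
    and qA: "\<forall>i<n. (\<Sum>l<n. transpose_mat A $$ (i, l) * q l) < 0"
    using metzler_hurwitz_pos_vector n0 by blast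
  have cols: "\<forall>j<n. (\<Sum>i<n. q i * A $$ (i, j)) < 0" using qA A by (simp add: mult.commute)
  obtain p where p: "\<forall>i<n. p i > 0" and rows: "\<forall>i<n. (\<Sum>l<n. A $$ (i, l) * p l) < 0"
    using metzler_hurwitz_pos_vector[OF met hur n0] by blast
  have "\<forall>i<n. \<forall>j<n. i \<noteq> j \<longrightarrow> A $$ (i, j) \<ge> 0" using met unfolding metzler_def by auto
  from metzler_diag_lyapunov[OF this p q rows cols] show ?thesis by (rule that)
qed

section \<open>Bordered matrices\<close>

definition bordered_mat :: "nat \<Rightarrow> (nat \<Rightarrow> nat \<Rightarrow> real) \<Rightarrow> nat \<Rightarrow> real \<Rightarrow> real \<Rightarrow> real mat" where
  "bordered_mat n B m r \<kappa> = mat (Suc n) (Suc n) (\<lambda>(i, j).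
     if i < n then (if j < n then B i j else if i = m then - r else 0)
     else if j = m then \<kappa> else 0)"

lemma bordered_mat_eigenvector:
  assumes ev: "eigenvalue (map_mat complex_of_real (bordered_mat n B m r \<kappa>)) \<mu>"
    and m: "m < n" and r: "r \<noteq> 0"
  obtains v :: "nat \<Rightarrow> complex"
  where "\<exists>i<n. v i \<noteq> 0"
    and "\<And>i. i < n \<Longrightarrow> (\<Sum>j<n. of_real (B i j) * v j) - (if i = m then of_real r * v n else 0) = \<mu> * v i"
    and "of_real \<kappa> * v m = \<mu> * v n"
proof -
  let ?J = "bordered_mat n B m r \<kappa>"
  obtain v where v: "v \<in> carrier_vec (Suc n)" "v \<noteq> 0\<^sub>v (Suc n)"
    "map_mat complex_of_real ?J *\<^sub>v v = \<mu> \<cdot>\<^sub>v v"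
    using ev unfolding eigenvalue_def eigenvector_def bordered_mat_def by auto
  have row: "(\<Sum>j<Suc n. of_real (?J $$ (i, j)) * v $ j) = \<mu> * v $ i" if "i < Suc n" for i
  proof -
    have "\<mu> * v $ i = (map_mat complex_of_real ?J *\<^sub>v v) $ i" by (subst v(3)) (use that v(1) in auto)
    also have "\<dots> = (\<Sum>j<Suc n. of_real (?J $$ (i, j)) * v $ j)"
      using that v(1) unfolding bordered_mat_def
      by (auto simp: scalar_prod_def lessThan_atLeast0 intro!: sum.cong)
    finally show ?thesis by simp
  qed
  have top: "(\<Sum>j<n. of_real (B i j) * v $ j) - (if i = m then of_real r * v $ n else 0) = \<mu> * v $ i"
    if i: "i < n" for i
  proof -
    have "(\<Sum>j<Suc n. of_real (?J $$ (i, j)) * v $ j)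
        = (\<Sum>j<n. of_real (B i j) * v $ j) - (if i = m then of_real r * v $ n else 0)"
      using i by (simp add: bordered_mat_def)
    thus ?thesis using row[of i] i by simp
  qed
  have bottom: "of_real \<kappa> * v $ m = \<mu> * v $ n"
  proof -
    have "(\<Sum>j<Suc n. of_real (?J $$ (n, j)) * v $ j) = (\<Sum>j<Suc n. if j = m then of_real \<kappa> * v $ j else 0)"
      by (intro sum.cong) (auto simp: bordered_mat_def)
    thus ?thesis using row[of n] m by simp
  qed
  have "\<exists>i<n. v $ i \<noteq> 0"
  proof (rule ccontr)
    assume "\<not> ?thesis"
    hence z: "\<forall>i<n. v $ i = 0" by auto
    hence "v $ n = 0" using top[OF m] m r by simp
    hence "v = 0\<^sub>v (Suc n)" using z v(1) by (intro eq_vecI) (auto simp: less_Suc_eq)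
    thus False using v(2) by simp
  qed
  then show ?thesis by (rule that[of "\<lambda>i. v $ i"]) (use top bottom in auto)
qed

text \<open>Weighting the border coordinate by \<open>r P\<^sub>m / \<kappa>\<close> turns the two coupling terms into
  \<open>r P\<^sub>m (cnj v\<^sub>n v\<^sub>m - cnj v\<^sub>m v\<^sub>n)\<close>, which is purely imaginary.\<close>
lemma bordered_mat_energy_identity:
  fixes v :: "nat \<Rightarrow> complex"
  assumes top: "\<And>i. i < n \<Longrightarrow> (\<Sum>j<n. of_real (B i j) * v j) - (if i = m then of_real r * v n else 0) = \<mu> * v i"
    and bottom: "of_real \<kappa> * v m = \<mu> * v n" and m: "m < n" and \<kappa>: "\<kappa> \<noteq> 0"
  shows "\<mu> * of_real ((\<Sum>i<n. P i * (cmod (v i))^2) + r * P m / \<kappa> * (cmod (v n))^2)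
    = (\<Sum>i<n. \<Sum>j<n. cnj (v i) * of_real (P i * B i j) * v j)
      + of_real (r * P m) * (cnj (v n) * v m - cnj (v m) * v n)"
proof -
  define S where "S = (\<Sum>i<n. \<Sum>j<n. cnj (v i) * of_real (P i * B i j) * v j)"
  have cs: "of_real ((cmod z)^2) = cnj z * z" for z
    by (metis complex_norm_square mult.commute)
  have "(\<Sum>i<n. cnj (v i) * of_real (P i) * (\<mu> * v i))
      = (\<Sum>i<n. cnj (v i) * of_real (P i) * ((\<Sum>j<n. of_real (B i j) * v j)
          - (if i = m then of_real r * v n else 0)))"
    using top by (intro sum.cong) auto
  also have "\<dots> = S - (\<Sum>i<n. if i = m then cnj (v i) * of_real (P i) * (of_real r * v n) else 0)"
    unfolding S_def sum_subtractf[symmetric]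
    by (intro sum.cong) (auto simp: right_diff_distrib sum_distrib_left ac_simps)
  also have "(\<Sum>i<n. if i = m then cnj (v i) * of_real (P i) * (of_real r * v n) else 0)
      = of_real (r * P m) * (cnj (v m) * v n)"
    using m by (simp add: ac_simps)
  finally have "\<mu> * of_real ((\<Sum>i<n. P i * (cmod (v i))^2) + r * P m / \<kappa> * (cmod (v n))^2)
      = S - of_real (r * P m) * (cnj (v m) * v n) + cnj (v n) * of_real (r * P m / \<kappa>) * (\<mu> * v n)"
    unfolding of_real_add of_real_sum of_real_mult cs
    by (simp add: sum_distrib_left algebra_simps)
  also have "cnj (v n) * of_real (r * P m / \<kappa>) * (\<mu> * v n) = of_real (r * P m) * (cnj (v n) * v m)"
    using bottom[symmetric] \<kappa> by (simp add: field_simps)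
  finally show ?thesis unfolding S_def by (simp add: algebra_simps)
qed

lemma bordered_mat_hurwitz:
  assumes L: "diag_lyapunov n B P" and m: "m < n" and r: "r > 0" and \<kappa>: "\<kappa> > 0"
  shows "hurwitz (Suc n) (bordered_mat n B m r \<kappa>)"
  unfolding hurwitz_def
proof (intro conjI allI impI)
  show "bordered_mat n B m r \<kappa> \<in> carrier_mat (Suc n) (Suc n)" by (simp add: bordered_mat_def)
  fix \<mu> assume ev: "eigenvalue (map_mat complex_of_real (bordered_mat n B m r \<kappa>)) \<mu>"
  have "r \<noteq> 0" using r by simp
  then obtain v where nz: "\<exists>i<n. v i \<noteq> 0"
    and top: "\<And>i. i < n \<Longrightarrow> (\<Sum>j<n. of_real (B i j) * v j) - (if i = m then of_real r * v n else 0) = \<mu> * v i"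
    and bottom: "of_real \<kappa> * v m = \<mu> * v n"
    by (rule bordered_mat_eigenvector[OF ev m]) auto
  define S where "S = (\<Sum>i<n. \<Sum>j<n. cnj (v i) * of_real (P i * B i j) * v j)"
  define D where "D = (\<Sum>i<n. P i * (cmod (v i))^2) + r * P m / \<kappa> * (cmod (v n))^2"
  have ReS: "Re S < 0"
    using L nz unfolding diag_lyapunov_def S_def by (elim conjE allE[of _ v]) simp
  have P: "\<forall>i<n. 0 < P i" using L unfolding diag_lyapunov_def by blast
  have D: "D \<ge> 0" unfolding D_def using P r \<kappa> m
    by (intro add_nonneg_nonneg sum_nonneg mult_nonneg_nonneg) (auto simp: less_imp_le)
  have "\<mu> * of_real D = S + of_real (r * P m) * (cnj (v n) * v m - cnj (v m) * v n)"
    unfolding D_def S_def using bordered_mat_energy_identity[OF top bottom m] \<kappa> by simp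
  hence "Re (\<mu> * of_real D) = Re S + r * P m * Re (cnj (v n) * v m - cnj (v m) * v n)"
    by simp
  also have "Re (cnj (v n) * v m - cnj (v m) * v n) = 0" by simp
  finally have "Re \<mu> * D < 0" using ReS by simp
  thus "Re \<mu> < 0" using D by (meson mult_nonneg_nonneg not_less)
qed

section \<open>The closed-loop vector field\<close>

lemma field_nth:
  assumes A: "A \<in> carrier_mat n n" and b0: "b0 \<in> carrier_vec n" and n0: "n > 0"
  shows "dim_vec (field n A b0 k \<beta> r w) = Suc n"
    and "i < n \<Longrightarrow> field n A b0 k \<beta> r w $ i = (\<Sum>l<n. A $$ (i, l) * w $ l)
          - (if i = n - 1 then w $ (n - 1) * w $ n else 0) + b0 $ i"
    and "field n A b0 k \<beta> r w $ n = - (k / \<beta>) * w $ n * (\<beta> - w $ n) * (r - w $ (n - 1))"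
proof -
  have first: "vec_first w n $ l = w $ l" if "l < n" for l using that unfolding vec_first_def by simp
  show "dim_vec (field n A b0 k \<beta> r w) = Suc n" using A b0 unfolding field_def Let_def by simp
  show "field n A b0 k \<beta> r w $ i = (\<Sum>l<n. A $$ (i, l) * w $ l)
          - (if i = n - 1 then w $ (n - 1) * w $ n else 0) + b0 $ i" if i: "i < n"
  proof -
    have "(A *\<^sub>v vec_first w n) $ i = (\<Sum>l<n. A $$ (i, l) * w $ l)"
      using A i first by (auto simp: scalar_prod_def lessThan_atLeast0 intro!: sum.cong)
    thus ?thesis using A b0 i n0 first[of "n - 1"] unfolding field_def Let_def
      by simp
  qed
  show "field n A b0 k \<beta> r w $ n = - (k / \<beta>) * w $ n * (\<beta> - w $ n) * (r - w $ (n - 1))"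
    using A b0 n0 first[of "n - 1"] unfolding field_def Let_def by simp
qed

lemma jacobian_eqI:
  assumes M: "M \<in> carrier_mat N N"
    and D: "\<And>i j. i < N \<Longrightarrow> j < N \<Longrightarrow>
      ((\<lambda>t. F (w + t \<cdot>\<^sub>v unit_vec N j) $ i) has_real_derivative M $$ (i, j)) (at 0)"
  shows "jacobian N F w = M"
proof (rule eq_matI)
  fix i j assume "i < dim_row M" "j < dim_col M"
  hence ij: "i < N" "j < N" using M by auto
  have "(THE D. ((\<lambda>t. F (w + t \<cdot>\<^sub>v unit_vec N j) $ i) has_real_derivative D) (at 0)) = M $$ (i, j)"
  proof (rule the_equality)
    fix D assume "((\<lambda>t. F (w + t \<cdot>\<^sub>v unit_vec N j) $ i) has_real_derivative D) (at 0)"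
    thus "D = M $$ (i, j)" using D[OF ij] by (rule DERIV_unique)
  qed (rule D[OF ij])
  thus "jacobian N F w $$ (i, j) = M $$ (i, j)" using ij unfolding jacobian_def by simp
qed (use M in \<open>simp_all add: jacobian_def\<close>)

lemma field_partial_derivative:
  assumes A: "A \<in> carrier_mat n n" and b0: "b0 \<in> carrier_vec n" and n0: "n > 0"
    and w: "w \<in> carrier_vec (Suc n)" and wm: "w $ (n - 1) = r"
    and i: "i < Suc n" and j: "j < Suc n"
  shows "((\<lambda>t. field n A b0 k \<beta> r (w + t \<cdot>\<^sub>v unit_vec (Suc n) j) $ i) has_real_derivative
    bordered_mat n (\<lambda>i j. A $$ (i, j) - (if i = j then if i = n - 1 then w $ n else 0 else 0))
      (n - 1) r (k / \<beta> * w $ n * (\<beta> - w $ n)) $$ (i, j)) (at 0)"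
    (is "(_ has_real_derivative ?J $$ (i, j)) _")
proof -
  define \<delta> where "\<delta> l = (if l = j then 1 else 0 :: real)" for l
  show ?thesis
  proof (cases "i < n")
    case True
    define c where "c = (if i = n - 1 then 1 else 0 :: real)"
    have f: "field n A b0 k \<beta> r (w + t \<cdot>\<^sub>v unit_vec (Suc n) j) $ i
      = (\<Sum>l<n. A $$ (i, l) * (w $ l + t * \<delta> l))
         - c * ((w $ (n - 1) + t * \<delta> (n - 1)) * (w $ n + t * \<delta> n)) + b0 $ i" for t
      unfolding field_nth(2)[OF A b0 n0 True] c_def \<delta>_def using n0 w j by (auto intro!: sum.cong)
    have "(\<Sum>l<n. A $$ (i, l) * \<delta> l) = (if j < n then A $$ (i, j) else 0)"
      unfolding \<delta>_def by (simp add: if_distrib cong: if_cong)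
    hence val: "(\<Sum>l<n. A $$ (i, l) * \<delta> l) - c * (\<delta> (n - 1) * w $ n + w $ (n - 1) * \<delta> n)
        = ?J $$ (i, j)"
      using True i j n0 wm unfolding bordered_mat_def c_def \<delta>_def by auto
    show ?thesis unfolding f val[symmetric]
      by (auto intro!: derivative_eq_intros simp: algebra_simps)
  next
    case False
    hence iN: "i = n" using i by simp
    have f: "field n A b0 k \<beta> r (w + t \<cdot>\<^sub>v unit_vec (Suc n) j) $ i
      = - (k / \<beta>) * (w $ n + t * \<delta> n) * (\<beta> - (w $ n + t * \<delta> n))
          * (r - (r + t * \<delta> (n - 1)))" for t
      unfolding iN field_nth(3)[OF A b0 n0] \<delta>_def using n0 w j wm by auto
    have val: "- (- (k / \<beta>) * w $ n * (\<beta> - w $ n) * \<delta> (n - 1)) = ?J $$ (i, j)"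
      using iN j unfolding bordered_mat_def \<delta>_def by auto
    have "((\<lambda>t. K * (z + t * dz) * (\<beta> - (z + t * dz)) * (r - (r + t * dx)))
        has_real_derivative - (K * z * (\<beta> - z) * dx)) (at 0)" for K z dz dx
      by (auto intro!: derivative_eq_intros simp: algebra_simps)
    then show ?thesis unfolding f val[symmetric] .
  qed
qed

lemma jacobian_field:
  assumes A: "A \<in> carrier_mat n n" and b0: "b0 \<in> carrier_vec n" and n0: "n > 0"
    and xs: "xs \<in> carrier_vec n" and xr: "xs $ (n - 1) = r"
  shows "jacobian (Suc n) (field n A b0 k \<beta> r) (xs @\<^sub>v vec 1 (\<lambda>_. zs))
    = bordered_mat n (\<lambda>i j. A $$ (i, j) - (if i = j then if i = n - 1 then zs else 0 else 0))
        (n - 1) r (k / \<beta> * zs * (\<beta> - zs))"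
proof (rule jacobian_eqI)
  let ?w = "xs @\<^sub>v vec 1 (\<lambda>_. zs)"
  have w: "?w \<in> carrier_vec (Suc n)" using xs by (intro carrier_vecI) simp
  have wn: "?w $ n = zs" and wm: "?w $ (n - 1) = r" using xs xr n0 by simp_all
  fix i j assume "i < Suc n" "j < Suc n"
  from field_partial_derivative[OF A b0 n0 w wm this]
  show "((\<lambda>t. field n A b0 k \<beta> r (?w + t \<cdot>\<^sub>v unit_vec (Suc n) j) $ i) has_real_derivative
    bordered_mat n (\<lambda>i j. A $$ (i, j) - (if i = j then if i = n - 1 then zs else 0 else 0))
      (n - 1) r (k / \<beta> * zs * (\<beta> - zs)) $$ (i, j)) (at 0)"
    unfolding wn .
qed (simp add: bordered_mat_def)

lemma diag_lyapunov_det_nonzero: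
  assumes L: "diag_lyapunov n (\<lambda>i j. A $$ (i, j)) P" and A: "A \<in> carrier_mat n n"
  shows "det A \<noteq> 0"
proof
  assume "det A = 0"
  then obtain v where v: "v \<in> carrier_vec n" "v \<noteq> 0\<^sub>v n" "A *\<^sub>v v = 0\<^sub>v n"
    using det_0_iff_vec_prod_zero_field[OF A] by blast
  have "(\<Sum>i<n. P i * v $ i * (A *\<^sub>v v) $ i) = 0" using v(3) by simp
  thus False using diag_lyapunov_real_form[OF L A v(1,2)] by simp
qed

lemma minv_inverse:
  assumes A: "A \<in> carrier_mat n n" and det: "det A \<noteq> 0"
  shows "minv n A \<in> carrier_mat n n" and "A * minv n A = 1\<^sub>m n" and "minv n A * A = 1\<^sub>m n"
proof -
  obtain B where "B \<in> carrier_mat n n" "B * A = 1\<^sub>m n" "A * B = 1\<^sub>m n"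
    using det_non_zero_imp_unit[OF A det, of "()"] unfolding Units_def ring_mat_def by auto
  hence "\<exists>B. B \<in> carrier_mat n n \<and> A * B = 1\<^sub>m n \<and> B * A = 1\<^sub>m n" by blast
  thus "minv n A \<in> carrier_mat n n" "A * minv n A = 1\<^sub>m n" "minv n A * A = 1\<^sub>m n"
    unfolding minv_def by (metis (mono_tags, lifting) someI_ex)+
qed

lemma mult_minv_mat_vec:
  assumes A: "A \<in> carrier_mat n n" and det: "det A \<noteq> 0" and v: "v \<in> carrier_vec n"
  shows "A *\<^sub>v (minv n A *\<^sub>v v) = v"
  using assoc_mult_mat_vec[OF A minv_inverse(1)[OF A det] v, symmetric] minv_inverse(2)[OF A det] v
  by simp

lemma diag_lyapunov_minv_diag_neg:
  assumes L: "diag_lyapunov n (\<lambda>i j. A $$ (i, j)) P" and A: "A \<in> carrier_mat n n" and m: "m < n"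
  shows "(minv n A *\<^sub>v unit_vec n m) $ m < 0"
proof -
  have det: "det A \<noteq> 0" by (rule diag_lyapunov_det_nonzero[OF L A])
  define u where "u = minv n A *\<^sub>v unit_vec n m"
  have u: "u \<in> carrier_vec n" unfolding u_def using minv_inverse(1)[OF A det] by simp
  have Au: "A *\<^sub>v u = unit_vec n m" unfolding u_def by (rule mult_minv_mat_vec[OF A det]) simp
  have "u \<noteq> 0\<^sub>v n"
  proof
    assume "u = 0\<^sub>v n"
    hence "A *\<^sub>v u = 0\<^sub>v n" using A by (intro eq_vecI) (auto simp: scalar_prod_def)
    thus False using Au m by (metis index_unit_vec(1) index_zero_vec(1) zero_neq_one)
  qed
  hence "(\<Sum>i<n. P i * u $ i * (A *\<^sub>v u) $ i) < 0" by (rule diag_lyapunov_real_form[OF L A u])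
  moreover have "(\<Sum>i<n. P i * u $ i * (A *\<^sub>v u) $ i) = P m * u $ m"
    unfolding Au using m by (simp add: if_distrib cong: if_cong)
  moreover have "P m > 0" using L m unfolding diag_lyapunov_def by blast
  ultimately show ?thesis unfolding u_def by (simp add: mult_less_0_iff)
qed

lemma minv_equilibrium:
  assumes A: "A \<in> carrier_mat n n" and det: "det A \<noteq> 0" and b: "b \<in> carrier_vec n" and m: "m < n"
    and xs: "xs = - (minv n A *\<^sub>v (b - c \<cdot>\<^sub>v unit_vec n m))"
  shows "A *\<^sub>v xs = c \<cdot>\<^sub>v unit_vec n m - b"
    and "xs $ m = - (minv n A *\<^sub>v b) $ m + c * (minv n A *\<^sub>v unit_vec n m) $ m"
proof -
  let ?B = "minv n A" and ?y = "b - c \<cdot>\<^sub>v unit_vec n m"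
  have B: "?B \<in> carrier_mat n n" by (rule minv_inverse(1)[OF A det])
  have y: "?y \<in> carrier_vec n" using b by simp
  have "A *\<^sub>v xs = - (A *\<^sub>v (?B *\<^sub>v ?y))"
    unfolding xs using A B y by (intro eq_vecI) auto
  also have "\<dots> = c \<cdot>\<^sub>v unit_vec n m - b"
    unfolding mult_minv_mat_vec[OF A det y] using b by (intro eq_vecI) auto
  finally show "A *\<^sub>v xs = c \<cdot>\<^sub>v unit_vec n m - b" .
  have "?B *\<^sub>v ?y = ?B *\<^sub>v b - c \<cdot>\<^sub>v (?B *\<^sub>v unit_vec n m)"
    using B b by (simp add: mult_minus_distrib_mat_vec mult_mat_vec)
  thus "xs $ m = - (?B *\<^sub>v b) $ m + c * (?B *\<^sub>v unit_vec n m) $ m"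
    unfolding xs using B m by simp
qed

lemma field_equilibrium:
  assumes A: "A \<in> carrier_mat n n" and b0: "b0 \<in> carrier_vec n" and n0: "n > 0"
    and xs: "xs \<in> carrier_vec n" and Axs: "A *\<^sub>v xs = (r * zs) \<cdot>\<^sub>v unit_vec n (n - 1) - b0"
    and xr: "xs $ (n - 1) = r"
  shows "field n A b0 k \<beta> r (xs @\<^sub>v vec 1 (\<lambda>_. zs)) = 0\<^sub>v (Suc n)"
proof (rule eq_vecI)
  let ?w = "xs @\<^sub>v vec 1 (\<lambda>_. zs)"
  have wl: "?w $ l = xs $ l" if "l < n" for l using xs that by simp
  have wn: "?w $ n = zs" using xs by simp
  show "dim_vec (field n A b0 k \<beta> r ?w) = dim_vec (0\<^sub>v (Suc n) :: real vec)"
    using field_nth(1)[OF A b0 n0] by simp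
  fix i assume "i < dim_vec (0\<^sub>v (Suc n) :: real vec)"
  hence "i < n \<or> i = n" by auto
  thus "field n A b0 k \<beta> r ?w $ i = 0\<^sub>v (Suc n) $ i"
  proof
    assume i: "i < n"
    have "(\<Sum>l<n. A $$ (i, l) * ?w $ l) = (A *\<^sub>v xs) $ i"
      using A xs i wl by (auto simp: scalar_prod_def lessThan_atLeast0 intro!: sum.cong)
    thus ?thesis unfolding field_nth(2)[OF A b0 n0 i] Axs using i b0 n0 wl[of "n - 1"] wn xr by auto
  qed (use field_nth(3)[OF A b0 n0] n0 wl[of "n - 1"] xr in simp)
qed

lemma equilibrium_z_bounds:
  fixes \<beta> gn g0 r :: real
  assumes \<beta>: "\<beta> > 0" and gn: "gn > 0" and lo: "g0 / (1 + \<beta> * gn) < r" and hi: "r < g0"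
  shows "0 < r" and "0 < (g0 - r) / (gn * r)" and "(g0 - r) / (gn * r) < \<beta>"
proof -
  have d: "1 + \<beta> * gn > 1" using \<beta> gn by simp
  have "g0 > 0"
  proof (rule ccontr)
    assume "\<not> g0 > 0"
    hence "g0 * (\<beta> * gn) \<le> 0" using \<beta> gn by (simp add: mult_nonpos_nonneg)
    hence "g0 * (1 + \<beta> * gn) \<le> g0" by (simp add: algebra_simps)
    hence "g0 \<le> g0 / (1 + \<beta> * gn)" using d by (simp add: le_divide_eq)
    thus False using lo hi by simp
  qed
  thus r: "0 < r" using lo d by (smt (verit) divide_pos_pos)
  show "0 < (g0 - r) / (gn * r)" using hi r gn by simp
  have "g0 < r * (1 + \<beta> * gn)" using lo d by (simp add: divide_less_eq)
  hence "g0 - r < \<beta> * (gn * r)" by (simp add: algebra_simps)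
  thus "(g0 - r) / (gn * r) < \<beta>" using r gn by (simp add: divide_less_eq)
qed


theorem mainTheorem19:
  fixes n :: nat and A :: "real mat" and b0 :: "real vec" and \<beta> r g0 gn zs :: real and xs :: "real vec"
  assumes "n \<ge> 1"
    and "metzler n A" and "hurwitz n A"
    and "b0 \<in> carrier_vec n" and "\<forall>i<n. 0 \<le> b0 $ i"
    and "\<beta> > 0"
    and "g0 = - (minv n A *\<^sub>v b0) $ (n - 1)"
    and "gn = - (minv n A *\<^sub>v unit_vec n (n - 1)) $ (n - 1)"
    and "g0 / (1 + \<beta> * gn) < r" and "r < g0"
    and "zs = (g0 - r) / (gn * r)"
    and "xs = - (minv n A *\<^sub>v (b0 - (r * zs) \<cdot>\<^sub>v unit_vec n (n - 1)))"
  shows "0 < zs \<and> zs < \<beta> \<and>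
    (\<forall>k>0. field n A b0 k \<beta> r (xs @\<^sub>v vec 1 (\<lambda>_. zs)) = 0\<^sub>v (n + 1) \<and>
           loc_exp_stable (n + 1) (field n A b0 k \<beta> r) (xs @\<^sub>v vec 1 (\<lambda>_. zs)))"
proof -
  have n0: "n > 0" and m: "n - 1 < n" using assms(1) by auto
  have A: "A \<in> carrier_mat n n" using assms(2) unfolding metzler_def by auto
  obtain P where P: "diag_lyapunov n (\<lambda>i j. A $$ (i, j)) P"
    using metzler_hurwitz_diag_lyapunov[OF assms(2,3) n0] by blast
  have det: "det A \<noteq> 0" by (rule diag_lyapunov_det_nonzero[OF P A])
  have gn: "gn > 0" using diag_lyapunov_minv_diag_neg[OF P A m] assms(8) by simp
  have r: "0 < r" and zs: "0 < zs" "zs < \<beta>"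
    using equilibrium_z_bounds[OF assms(6) gn assms(9,10)] assms(11) by auto
  have Axs: "A *\<^sub>v xs = (r * zs) \<cdot>\<^sub>v unit_vec n (n - 1) - b0"
    and "xs $ (n - 1) = g0 - r * zs * gn"
    using minv_equilibrium[OF A det assms(4) m assms(12)] assms(7,8) by (simp_all add: algebra_simps)
  hence xr: "xs $ (n - 1) = r" using r gn assms(11) by simp
  have xs: "xs \<in> carrier_vec n" using assms(12) minv_inverse(1)[OF A det] assms(4) by simp
  have L: "diag_lyapunov n (\<lambda>i j. A $$ (i, j) - (if i = j then if i = n - 1 then zs else 0 else 0)) P"
    by (rule diag_lyapunov_diff_diag[OF P]) (use zs in auto)
  have "hurwitz (Suc n) (bordered_mat n (\<lambda>i j. A $$ (i, j) - (if i = j then if i = n - 1 then zs else 0 else 0))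
      (n - 1) r (k / \<beta> * zs * (\<beta> - zs)))" if "k > 0" for k
    by (intro bordered_mat_hurwitz[OF L m r] mult_pos_pos divide_pos_pos) (use zs assms(6) that in auto)
  thus ?thesis
    using zs field_equilibrium[OF A assms(4) n0 xs Axs xr] jacobian_field[OF A assms(4) n0 xs xr]
    unfolding loc_exp_stable_def by simp
qed

end
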